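(* Let $z\in\mathcal F_\infty$. If $v,w\in\mathcal A_{\mathrm{FPF}}(z)$ and $v<_{\mathcal A}w$, then $\lambda(v)<\lambda(w)$ in the dominance order.
   Context: Let $S_\infty$ be the group of finitely supported permutations of $\mathbb P$, and let $\ell(w)$ be the number of inversions of $w$. Let $\Theta(i)=i-(-1)^i$ and $\mathcal F_\infty=\{w^{-1}\Theta w:w\in S_\infty\}$. Let $\mathcal A_{\mathrm{FPF}}(z)$ be the set of minimal-length $w$ with $z=w^{-1}\Theta w$. Define $<_{\mathcal A}$ on $S_\infty$ as the transitive relation generated by the following rule. Set $v<_{\mathcal A}w$ when the one-line representation of $w^{-1}$ is obtained from that of $v^{-1}$ by replacing a consecutive subsequence $a\,d\,b\,c$, beginning at an odd position and with $a<b<c<d$, by $b\,c\,a\,d$. The code of $w\in S_\infty$ is $c(w)=(c_1,c_2,\dots)$ with $c_i=\#\{j>i:w(j)<w(i)\}$. The shape $\lambda(w)$ is the partition obtained by sorting $c(w)$. *)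

theory Defs
  imports Main
begin

text \<open>Permutations of the positive integers are modelled as functions nat => nat
  that fix 0, are bijective and have finite support.\<close>

definition S_inf :: "(nat \<Rightarrow> nat) set" where
  "S_inf = {w. bij w \<and> w 0 = 0 \<and> finite {i. w i \<noteq> i}}"

definition Theta :: "nat \<Rightarrow> nat" where
  "Theta i = (if i = 0 then 0 else if odd i then i + 1 else i - 1)"

definition inv_len :: "(nat \<Rightarrow> nat) \<Rightarrow> nat" where
  "inv_len w = card {(i, j). 0 < i \<and> i < j \<and> w j < w i}"

definition twist :: "(nat \<Rightarrow> nat) \<Rightarrow> (nat \<Rightarrow> nat)" where
  "twist w = inv w \<circ> Theta \<circ> w"

definition F_inf :: "(nat \<Rightarrow> nat) set" where
  "F_inf = {twist w | w. w \<in> S_inf}"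

definition A_FPF :: "(nat \<Rightarrow> nat) \<Rightarrow> (nat \<Rightarrow> nat) set" where
  "A_FPF z = {w \<in> S_inf. twist w = z \<and>
      (\<forall>u \<in> S_inf. twist u = z \<longrightarrow> inv_len w \<le> inv_len u)}"

text \<open>Covering step: the one-line word of inv w arises from that of inv v by
  replacing a consecutive a d b c starting at odd position i with b c a d,
  where a < b < c < d.\<close>
definition A_step :: "(nat \<Rightarrow> nat) \<Rightarrow> (nat \<Rightarrow> nat) \<Rightarrow> bool" where
  "A_step v w \<longleftrightarrow> v \<in> S_inf \<and> w \<in> S_inf \<and>
     (\<exists>i. odd i \<and>
        (let a = inv v i; d = inv v (i+1); b = inv v (i+2); c = inv v (i+3) in
          a < b \<and> b < c \<and> c < d \<and>
          inv w i = b \<and> inv w (i+1) = c \<and> inv w (i+2) = a \<and> inv w (i+3) = d \<and>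
          (\<forall>j. j \<notin> {i, i+1, i+2, i+3} \<longrightarrow> inv w j = inv v j)))"

definition A_less :: "(nat \<Rightarrow> nat) \<Rightarrow> (nat \<Rightarrow> nat) \<Rightarrow> bool" where
  "A_less = tranclp A_step"

definition code :: "(nat \<Rightarrow> nat) \<Rightarrow> nat \<Rightarrow> nat" where
  "code w i = card {j. i < j \<and> w j < w i}"

definition supp_bound :: "(nat \<Rightarrow> nat) \<Rightarrow> nat" where
  "supp_bound w = (if {i. w i \<noteq> i} = {} then 1 else Suc (Max {i. w i \<noteq> i}))"

text \<open>Shape: the nonzero code entries c_1, c_2, ... sorted into weakly decreasing order
  (all c_i with i beyond the support vanish).\<close>
definition shape :: "(nat \<Rightarrow> nat) \<Rightarrow> nat list" where
  "shape w = rev (sort (filter (\<lambda>x. x \<noteq> 0) (map (code w) [1..<supp_bound w])))"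

definition dominates_le :: "nat list \<Rightarrow> nat list \<Rightarrow> bool" where
  "dominates_le lam mu \<longleftrightarrow> sum_list lam = sum_list mu \<and>
     (\<forall>k. sum_list (take k lam) \<le> sum_list (take k mu))"

definition dominates_less :: "nat list \<Rightarrow> nat list \<Rightarrow> bool" where
  "dominates_less lam mu \<longleftrightarrow> dominates_le lam mu \<and> lam \<noteq> mu"

end

theory Submission
  imports Defs "HOL-Library.Multiset"
begin

text \<open>If the covering step moves a d b c to b c a d, then in terms of positions v sends
  a < b < c < d to i, i+2, i+3, i+1 and w sends them to i+2, i, i+1, i+3, while v and w agree
  elsewhere. Inversions with a partner outside {a, b, c, d} are the same for v and w; counting
  them by E, the codes of v at a, b, c are E a, E b + 1, E c + 1 and those of w are E a + 2,
  E b, E c, with E b, E c \<le> E a. So the shape of w arises from that of v by moving one box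
  from each of two parts to a part that is at least as large. Such transfers can only raise
  the partial sums of a partition, and here they strictly raise the sum of the squared parts,
  which makes the dominance strict along chains of covering steps.\<close>

definition partition_of :: "nat multiset \<Rightarrow> nat list" where
  "partition_of M = rev (sorted_list_of_multiset (filter_mset (\<lambda>x. x \<noteq> 0) M))"

definition count_ge :: "nat multiset \<Rightarrow> nat \<Rightarrow> nat" where
  "count_ge M t = size (filter_mset (\<lambda>x. t \<le> x) M)"

lemma sorted_wrt_partition_of: "sorted_wrt (\<ge>) (partition_of M)"
  by (simp add: partition_of_def sorted_wrt_rev sorted_sorted_list_of_multiset)

lemma mset_partition_of: "mset (partition_of M) = filter_mset (\<lambda>x. x \<noteq> 0) M"
  by (simp add: partition_of_def)

lemma sum_list_map_partition_of:
  assumes "f 0 = 0"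
  shows "sum_list (map f (partition_of M)) = (\<Sum>x\<in>#M. f x)"
proof -
  have "sum_list (map f (partition_of M)) = (\<Sum>x\<in>#filter_mset (\<lambda>x. x \<noteq> 0) M. f x)"
    by (metis mset_partition_of mset_map sum_mset_sum_list)
  also have "\<dots> = (\<Sum>x\<in>#M. f x)"
    using assms by (induction M) auto
  finally show ?thesis .
qed

lemma sum_list_partition_of: "sum_list (partition_of M) = sum_mset M"
  using sum_list_map_partition_of[of id M] by simp

lemma sum_list_eq_sum_levels:
  "\<forall>x\<in>set xs. x \<le> B \<Longrightarrow> sum_list xs = (\<Sum>t=1..B. length (filter (\<lambda>x. t \<le> x) xs))"
proof (induction xs)
  case Nil then show ?case by simp
next
  case (Cons x xs)
  have "{t\<in>{1..B}. t \<le> x} = {1..x}" using Cons.prems by auto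
  then have "(\<Sum>t=1..B. if t \<le> x then 1 else 0::nat) = x"
    by (simp add: sum.inter_filter[symmetric])
  moreover have "length (filter (\<lambda>y. t \<le> y) (x # xs))
      = (if t \<le> x then 1 else 0) + length (filter (\<lambda>y. t \<le> y) xs)" for t
    by simp
  ultimately show ?case using Cons by (simp only: sum.distrib sum_list.Cons) simp
qed

lemma length_filter_ge_take:
  "sorted_wrt (\<ge>) (xs :: nat list) \<Longrightarrow>
     length (filter (\<lambda>x. t \<le> x) (take k xs)) = min k (length (filter (\<lambda>x. t \<le> x) xs))"
proof (induction xs arbitrary: k)
  case Nil then show ?case by simp
next
  case (Cons x xs)
  show ?case
  proof (cases "k = 0 \<or> t \<le> x")
    case True then show ?thesis using Cons by (cases k) auto
  next
    case False
    then have "\<forall>y\<in>set xs. \<not> t \<le> y" using Cons.prems by auto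
    then have "filter (\<lambda>x. t \<le> x) xs = []" "filter (\<lambda>x. t \<le> x) (take (k - 1) xs) = []"
      by (auto simp: filter_empty_conv dest: in_set_takeD)
    with False show ?thesis by (cases k) auto
  qed
qed

lemma sum_list_take_partition_of:
  assumes "\<forall>x\<in>#M. x \<le> B"
  shows "sum_list (take k (partition_of M)) = (\<Sum>t=1..B. min k (count_ge M t))"
proof -
  have "\<forall>x\<in>set (take k (partition_of M)). x \<le> B"
    using assms by (auto simp: partition_of_def dest!: in_set_takeD)
  then have "sum_list (take k (partition_of M))
      = (\<Sum>t=1..B. length (filter (\<lambda>x. t \<le> x) (take k (partition_of M))))"
    by (rule sum_list_eq_sum_levels)
  also have "\<dots> = (\<Sum>t=1..B. min k (length (filter (\<lambda>x. t \<le> x) (partition_of M))))"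
    using length_filter_ge_take[OF sorted_wrt_partition_of] by simp
  also have "\<dots> = (\<Sum>t=1..B. min k (count_ge M t))"
  proof (rule sum.cong)
    fix t assume "t \<in> {1..B}"
    then have "filter_mset (\<lambda>x. t \<le> x) (filter_mset (\<lambda>x. x \<noteq> 0) M) = filter_mset (\<lambda>x. t \<le> x) M"
      by (auto simp: filter_filter_mset intro: filter_mset_cong)
    then show "min k (length (filter (\<lambda>x. t \<le> x) (partition_of M))) = min k (count_ge M t)"
      by (metis count_ge_def mset_filter mset_partition_of size_mset)
  qed simp
  finally show ?thesis .
qed

lemma count_ge_antimono: "t \<le> s \<Longrightarrow> count_ge M s \<le> count_ge M t"
  unfolding count_ge_def by (intro size_mset_mono filter_mset_mono_strong) auto

text \<open>Only the levels x and y + 1 change: one part gains level y + 1, the other loses level x,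
  and at most as many parts reach y + 1 as reach x.\<close>
lemma sum_min_count_ge_transfer:
  assumes "1 \<le> x" "x \<le> y + 1" "y + 1 \<le> B"
  shows "(\<Sum>t=1..B. min k (count_ge (R + {#x, y#}) t))
       \<le> (\<Sum>t=1..B. min k (count_ge (R + {#x - 1, y + 1#}) t))"
proof (cases "x = y + 1")
  case True
  then have "R + {#x, y#} = R + {#x - 1, y + 1#}" by (simp add: add_mset_commute)
  then show ?thesis by (simp only: order_refl)
next
  case False
  let ?f = "\<lambda>t. min k (count_ge (R + {#x, y#}) t)"
  let ?g = "\<lambda>t. min k (count_ge (R + {#x - 1, y + 1#}) t)"
  define S where "S = {1..B} - {x, y + 1}"
  have split: "sum h {1..B} = h x + h (y + 1) + sum h S" for h :: "nat \<Rightarrow> nat"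
    using assms False sum.remove[of "{1..B}" x h] sum.remove[of "{1..B} - {x}" "y + 1" h]
    by (simp add: S_def Diff_insert2 [symmetric] add.assoc)
  have "count_ge R (y + 1) \<le> count_ge R x"
    using assms by (intro count_ge_antimono) simp
  then have "?f x + ?f (y + 1) \<le> ?g x + ?g (y + 1)"
    using assms False by (simp add: count_ge_def min_def)
  moreover have "sum ?f S = sum ?g S"
    using assms by (intro sum.cong) (auto simp: S_def count_ge_def)
  ultimately show ?thesis using split[of ?f] split[of ?g] by linarith
qed

lemma dominates_le_trans: "dominates_le x y \<Longrightarrow> dominates_le y z \<Longrightarrow> dominates_le x z"
  unfolding dominates_le_def by (metis le_trans)

lemma member_le_sum_mset:
  fixes M :: "'a::canonically_ordered_monoid_add multiset"
  assumes "x \<in># M"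
  shows "x \<le> sum_mset M"
proof -
  obtain N where "M = add_mset x N" using multi_member_split[OF assms] ..
  then show ?thesis by (auto simp: le_iff_add)
qed

lemma dominates_le_partition_of_transfer:
  assumes "1 \<le> x" "x \<le> y + 1"
  shows "dominates_le (partition_of (R + {#x, y#})) (partition_of (R + {#x - 1, y + 1#}))"
proof -
  define B where "B = sum_mset (R + {#x, y#})"
  have same_sum: "sum_mset (R + {#x - 1, y + 1#}) = B"
    using assms by (simp add: B_def)
  have "sum_list (take k (partition_of (R + {#x, y#})))
      \<le> sum_list (take k (partition_of (R + {#x - 1, y + 1#})))" for k
  proof -
    have "sum_list (take k (partition_of (R + {#x, y#})))
        = (\<Sum>t=1..B. min k (count_ge (R + {#x, y#}) t))"
      by (rule sum_list_take_partition_of) (unfold B_def, blast intro: member_le_sum_mset)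
    also have "\<dots> \<le> (\<Sum>t=1..B. min k (count_ge (R + {#x - 1, y + 1#}) t))"
      using assms by (intro sum_min_count_ge_transfer) (simp_all add: B_def)
    also have "\<dots> = sum_list (take k (partition_of (R + {#x - 1, y + 1#})))"
      by (rule sum_list_take_partition_of[symmetric]) (metis same_sum member_le_sum_mset)
    finally show ?thesis .
  qed
  with same_sum show ?thesis
    by (simp add: dominates_le_def sum_list_partition_of B_def)
qed

lemma partition_of_raise:
  fixes ea eb ec :: nat
  assumes "eb \<le> ea" "ec \<le> ea"
  shows "dominates_le (partition_of (R + {#ea, eb + 1, ec + 1#})) (partition_of (R + {#ea + 2, eb, ec#}))"
    and "sum_list (map (\<lambda>x. x\<^sup>2) (partition_of (R + {#ea, eb + 1, ec + 1#})))
       < sum_list (map (\<lambda>x. x\<^sup>2) (partition_of (R + {#ea + 2, eb, ec#})))"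
proof -
  have "dominates_le (partition_of ((R + {#ec + 1#}) + {#eb + 1, ea#}))
                     (partition_of ((R + {#ec + 1#}) + {#eb + 1 - 1, ea + 1#}))"
    using assms by (intro dominates_le_partition_of_transfer) auto
  moreover have "dominates_le (partition_of ((R + {#eb#}) + {#ec + 1, ea + 1#}))
                     (partition_of ((R + {#eb#}) + {#ec + 1 - 1, ea + 1 + 1#}))"
    using assms by (intro dominates_le_partition_of_transfer) auto
  ultimately show "dominates_le (partition_of (R + {#ea, eb + 1, ec + 1#}))
                                (partition_of (R + {#ea + 2, eb, ec#}))"
    by (simp add: add_mset_commute dominates_le_trans)
  have "ea\<^sup>2 + (eb + 1)\<^sup>2 + (ec + 1)\<^sup>2 < (ea + 2)\<^sup>2 + eb\<^sup>2 + ec\<^sup>2"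
    using assms by (simp add: power2_eq_square algebra_simps)
  then show "sum_list (map (\<lambda>x. x\<^sup>2) (partition_of (R + {#ea, eb + 1, ec + 1#})))
           < sum_list (map (\<lambda>x. x\<^sup>2) (partition_of (R + {#ea + 2, eb, ec#})))"
    by (simp add: sum_list_map_partition_of)
qed

lemma fixed_beyond_supp_bound:
  assumes "u \<in> S_inf" "supp_bound u \<le> j"
  shows "u j = j"
proof (rule ccontr)
  assume moved: "u j \<noteq> j"
  have "finite {i. u i \<noteq> i}" using assms(1) by (simp add: S_inf_def)
  with moved have "j \<le> Max {i. u i \<noteq> i}" by (simp add: Max_ge)
  with moved assms(2) show False unfolding supp_bound_def by (auto split: if_splits)
qed

lemma code_beyond_supp_bound:
  assumes "u \<in> S_inf" "supp_bound u \<le> k"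
  shows "code u k = 0"
proof -
  have "{j. k < j \<and> u j < u k} = {}"
    using fixed_beyond_supp_bound[OF assms(1)] assms(2) by auto
  then show ?thesis by (simp only: code_def card.empty)
qed

lemma shape_eq_partition_of:
  assumes "u \<in> S_inf" "supp_bound u \<le> N"
  shows "shape u = partition_of (image_mset (code u) (mset_set {1..<N}))"
proof -
  have "k < supp_bound u" if "code u k \<noteq> 0" for k
    using code_beyond_supp_bound[OF assms(1), of k] that by (meson not_le)
  then have "{k\<in>{1..<N}. code u k \<noteq> 0} = {k\<in>{1..<supp_bound u}. code u k \<noteq> 0}"
    using assms(2) by (auto intro: less_le_trans)
  then have "filter_mset (\<lambda>x. x \<noteq> 0) (image_mset (code u) (mset_set {1..<N}))
      = filter_mset (\<lambda>x. x \<noteq> 0) (image_mset (code u) (mset_set {1..<supp_bound u}))"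
    by (simp add: filter_mset_image_mset)
  also have "\<dots> = mset (filter (\<lambda>x. x \<noteq> 0) (map (code u) [1..<supp_bound u]))"
    by (simp add: mset_filter mset_upt)
  finally have nonzero_codes: "filter_mset (\<lambda>x. x \<noteq> 0) (image_mset (code u) (mset_set {1..<N}))
      = mset (filter (\<lambda>x. x \<noteq> 0) (map (code u) [1..<supp_bound u]))" .
  show ?thesis
    unfolding shape_def partition_of_def nonzero_codes sorted_list_of_multiset_mset ..
qed

lemma code_in_block:
  assumes "inj u" "finite P" "k \<in> P" "u ` P \<subseteq> {lo..hi}" "\<forall>j. j \<notin> P \<longrightarrow> u j \<notin> {lo..hi}"
  shows "code u k = card {j. j \<notin> P \<and> k < j \<and> u j < lo} + card {j\<in>P. k < j \<and> u j < u k}"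
proof -
  have "u k \<in> {lo..hi}" using assms(3,4) by auto
  then have split: "{j. k < j \<and> u j < u k}
      = {j. j \<notin> P \<and> k < j \<and> u j < lo} \<union> {j\<in>P. k < j \<and> u j < u k}"
    using assms(5) by force
  have "finite {j. j \<notin> P \<and> k < j \<and> u j < lo}"
    by (rule finite_subset[OF _ finite_vimageI[OF finite_lessThan[of lo] assms(1)]]) auto
  then show ?thesis
    unfolding code_def split using assms(2) by (intro card_Un_disjoint) auto
qed

lemma code_outside_block:
  assumes "k \<notin> P" "u ` P \<subseteq> {lo..hi}" "v ` P \<subseteq> {lo..hi}"
    "\<forall>j. j \<notin> P \<longrightarrow> u j = v j \<and> v j \<notin> {lo..hi}"
  shows "code u k = code v k"
proof -
  have "u j < u k \<longleftrightarrow> v j < v k" for j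
    using assms by (cases "j \<in> P") (force, metis)
  then show ?thesis by (simp add: code_def)
qed

lemma A_step_positions:
  assumes "A_step v w"
  obtains i a b c d where "0 < a" "a < b" "b < c" "c < d"
    "v a = i" "v d = i + 1" "v b = i + 2" "v c = i + 3"
    "w b = i" "w c = i + 1" "w a = i + 2" "w d = i + 3"
    "\<forall>j. j \<notin> {a, b, c, d} \<longrightarrow> w j = v j \<and> v j \<notin> {i..i + 3}"
proof -
  from assms obtain i where S: "v \<in> S_inf" "w \<in> S_inf" and "odd i"
    and lt: "inv v i < inv v (i+2)" "inv v (i+2) < inv v (i+3)" "inv v (i+3) < inv v (i+1)"
    and wi: "inv w i = inv v (i+2)" "inv w (i+1) = inv v (i+3)"
      "inv w (i+2) = inv v i" "inv w (i+3) = inv v (i+1)"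
    and rest: "\<forall>j. j \<notin> {i, i+1, i+2, i+3} \<longrightarrow> inv w j = inv v j"
    unfolding A_step_def Let_def by blast
  have "bij v" "bij w" "v 0 = 0" using S by (auto simp: S_inf_def)
  then have v_inv: "v (inv v y) = y" and w_inv: "w (inv w y) = y" and inv_v: "inv v (v x) = x"
    for x y by (simp_all add: bij_is_surj bij_is_inj surj_f_inv_f)
  have "inv v i \<noteq> 0"
    using \<open>v 0 = 0\<close> \<open>odd i\<close> v_inv[of i] by (metis even_zero)
  have w_block: "w (inv v (i+2)) = i" "w (inv v (i+3)) = i+1" "w (inv v i) = i+2" "w (inv v (i+1)) = i+3"
    using w_inv[of i] w_inv[of "i+1"] w_inv[of "i+2"] w_inv[of "i+3"] by (simp_all only: wi)
  have off_block: "w j = v j \<and> v j \<notin> {i..i+3}"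
    if "j \<notin> {inv v i, inv v (i+2), inv v (i+3), inv v (i+1)}" for j
  proof -
    have "v j \<notin> {i, i+1, i+2, i+3}" using that inv_v[of j] by auto
    moreover have "{i..i+3} = {i, i+1, i+2, i+3}" by auto
    moreover have "inv w (v j) = j" using rest inv_v calculation(1) by simp
    ultimately show ?thesis using w_inv[of "v j"] by simp
  qed
  show thesis
    by (rule that[of "inv v i" "inv v (i+2)" "inv v (i+3)" "inv v (i+1)" i])
      (use \<open>inv v i \<noteq> 0\<close> lt v_inv w_block off_block in auto)
qed

lemma inj_if_S_inf: "u \<in> S_inf \<Longrightarrow> inj u"
  by (simp add: S_inf_def bij_is_inj)

lemma A_step_codes:
  assumes "A_step v w"
  obtains a b c d and E :: "nat \<Rightarrow> nat"
  where "0 < a" "a < b" "b < c" "c < d" "E b \<le> E a" "E c \<le> E a"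
    "code v a = E a" "code v b = E b + 1" "code v c = E c + 1"
    "code w a = E a + 2" "code w b = E b" "code w c = E c" "code w d = code v d"
    "\<forall>k. k \<notin> {a, b, c, d} \<longrightarrow> code w k = code v k"
proof -
  obtain i a b c d where "0 < a" "a < b" "b < c" "c < d"
    and v_block: "v a = i" "v d = i + 1" "v b = i + 2" "v c = i + 3"
    and w_block: "w b = i" "w c = i + 1" "w a = i + 2" "w d = i + 3"
    and off_block: "\<forall>j. j \<notin> {a, b, c, d} \<longrightarrow> w j = v j \<and> v j \<notin> {i..i + 3}"
    by (rule A_step_positions[OF assms])
  have "v \<in> S_inf" "w \<in> S_inf" using assms by (simp_all add: A_step_def)
  define P where "P = {a, b, c, d}"
  define E where "E k = card {j. j \<notin> P \<and> k < j \<and> v j < i}" for k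
    \<comment> \<open>inversions at k with a partner outside the block; the same for w\<close>
  have "finite P" by (simp add: P_def)
  have block: "v ` P \<subseteq> {i..i + 3}" "w ` P \<subseteq> {i..i + 3}"
    by (auto simp: P_def v_block w_block)
  have off: "\<forall>j. j \<notin> P \<longrightarrow> w j = v j \<and> v j \<notin> {i..i + 3}"
    using off_block by (simp add: P_def)
  have code_v: "code v k = E k + card {j\<in>P. k < j \<and> v j < v k}" if "k \<in> P" for k
    using code_in_block[OF inj_if_S_inf[OF \<open>v \<in> S_inf\<close>] \<open>finite P\<close> that block(1)] off
    by (simp add: E_def)
  have "{j. j \<notin> P \<and> k < j \<and> w j < i} = {j. j \<notin> P \<and> k < j \<and> v j < i}" for k
    using off by auto
  then have code_w: "code w k = E k + card {j\<in>P. k < j \<and> w j < w k}" if "k \<in> P" for k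
    using code_in_block[OF inj_if_S_inf[OF \<open>w \<in> S_inf\<close>] \<open>finite P\<close> that block(2)] off
    by (simp add: E_def)
  have "{j\<in>P. a < j \<and> v j < v a} = {}" "{j\<in>P. b < j \<and> v j < v b} = {d}"
    "{j\<in>P. c < j \<and> v j < v c} = {d}" "{j\<in>P. d < j \<and> v j < v d} = {}"
    "{j\<in>P. a < j \<and> w j < w a} = {b, c}" "{j\<in>P. b < j \<and> w j < w b} = {}"
    "{j\<in>P. c < j \<and> w j < w c} = {}" "{j\<in>P. d < j \<and> w j < w d} = {}"
    using \<open>a < b\<close> \<open>b < c\<close> \<open>c < d\<close> by (auto simp: P_def v_block w_block)
  then have codes: "code v a = E a" "code v b = E b + 1" "code v c = E c + 1" "code v d = E d"
    "code w a = E a + 2" "code w b = E b" "code w c = E c" "code w d = E d"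
    using code_v code_w \<open>b < c\<close> by (simp_all add: P_def)
  have E_antimono: "E k' \<le> E k" if "k \<le> k'" for k k'
  proof -
    have "finite {j. v j < i}"
      using finite_vimageI[OF finite_lessThan[of i] inj_if_S_inf[OF \<open>v \<in> S_inf\<close>]]
      by (simp add: vimage_def lessThan_def)
    then show ?thesis unfolding E_def using that by (intro card_mono) (auto elim: finite_subset)
  qed
  have codes_off: "\<forall>k. k \<notin> {a, b, c, d} \<longrightarrow> code w k = code v k"
    using code_outside_block[OF _ block(2,1) off] unfolding P_def by blast
  have "E b \<le> E a" "E c \<le> E a"
    using E_antimono[of a b] E_antimono[of a c] \<open>a < b\<close> \<open>b < c\<close> by simp_all
  then show thesis
    by (rule that[OF \<open>0 < a\<close> \<open>a < b\<close> \<open>b < c\<close> \<open>c < d\<close> _ _ _ _ _ _ _ _ _ codes_off])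
      (simp_all only: codes)
qed

lemma A_step_code_multisets:
  assumes "A_step v w"
  obtains N R ea eb ec where "eb \<le> ea" "ec \<le> ea" "supp_bound v \<le> N" "supp_bound w \<le> N"
    "image_mset (code v) (mset_set {1..<N}) = R + {#ea, eb + 1, ec + 1#}"
    "image_mset (code w) (mset_set {1..<N}) = R + {#ea + 2, eb, ec#}"
proof -
  obtain a b c d and E :: "nat \<Rightarrow> nat"
    where "0 < a" "a < b" "b < c" "c < d" "E b \<le> E a" "E c \<le> E a"
      and codes: "code v a = E a" "code v b = E b + 1" "code v c = E c + 1"
        "code w a = E a + 2" "code w b = E b" "code w c = E c" "code w d = code v d"
      and codes_off: "\<forall>k. k \<notin> {a, b, c, d} \<longrightarrow> code w k = code v k"
    by (rule A_step_codes[OF assms])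
  define N where "N = supp_bound v + supp_bound w + d + 1"
  define Q where "Q = {1..<N} - {a, b, c, d}"
  have "{1..<N} = Q \<union> {a, b, c, d}" "{a, b, c, d} \<subseteq> {1..<N}"
    using \<open>0 < a\<close> \<open>a < b\<close> \<open>b < c\<close> \<open>c < d\<close> by (auto simp: Q_def N_def)
  then have N_split: "mset_set {1..<N} = mset_set Q + {#a, b, c, d#}"
    using mset_set_Union[of Q "{a, b, c, d}"] \<open>a < b\<close> \<open>b < c\<close> \<open>c < d\<close>
    by (auto simp: Q_def)
  have "image_mset (code w) (mset_set Q) = image_mset (code v) (mset_set Q)"
    using codes_off by (intro image_mset_cong) (simp add: Q_def)
  then have
    "image_mset (code v) (mset_set {1..<N}) = (image_mset (code v) (mset_set Q) + {#code v d#}) + {#E a, E b + 1, E c + 1#}"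
    "image_mset (code w) (mset_set {1..<N}) = (image_mset (code v) (mset_set Q) + {#code v d#}) + {#E a + 2, E b, E c#}"
    unfolding N_split by (simp_all add: codes add_mset_commute)
  moreover have "supp_bound v \<le> N" "supp_bound w \<le> N" by (simp_all add: N_def)
  ultimately show thesis using \<open>E b \<le> E a\<close> \<open>E c \<le> E a\<close> by (intro that)
qed

lemma A_step_raises_shape:
  assumes "A_step v w"
  shows "dominates_le (shape v) (shape w)"
    and "sum_list (map (\<lambda>x. x\<^sup>2) (shape v)) < sum_list (map (\<lambda>x. x\<^sup>2) (shape w))"
proof -
  obtain N R ea eb ec where "eb \<le> ea" "ec \<le> ea" "supp_bound v \<le> N" "supp_bound w \<le> N"
    and codes: "image_mset (code v) (mset_set {1..<N}) = R + {#ea, eb + 1, ec + 1#}"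
      "image_mset (code w) (mset_set {1..<N}) = R + {#ea + 2, eb, ec#}"
    using A_step_code_multisets[OF assms] .
  moreover have "v \<in> S_inf" "w \<in> S_inf" using assms by (simp_all add: A_step_def)
  ultimately have "shape v = partition_of (R + {#ea, eb + 1, ec + 1#})"
    "shape w = partition_of (R + {#ea + 2, eb, ec#})"
    by (metis shape_eq_partition_of)+
  with partition_of_raise[OF \<open>eb \<le> ea\<close> \<open>ec \<le> ea\<close>]
  show "dominates_le (shape v) (shape w)"
    and "sum_list (map (\<lambda>x. x\<^sup>2) (shape v)) < sum_list (map (\<lambda>x. x\<^sup>2) (shape w))"
    by simp_all
qed

text \<open>Already every covering step raises the shape strictly.\<close>
theorem lemma3p29:
  assumes "z \<in> F_inf"
    and "v \<in> A_FPF z" and "w \<in> A_FPF z"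
    and "A_less v w"
  shows "dominates_less (shape v) (shape w)"
proof -
  have "dominates_le (shape v) (shape w)
      \<and> sum_list (map (\<lambda>x. x\<^sup>2) (shape v)) < sum_list (map (\<lambda>x. x\<^sup>2) (shape w))"
    using \<open>A_less v w\<close> unfolding A_less_def
  proof (induction rule: tranclp_induct)
    case (base u)
    then show ?case using A_step_raises_shape by blast
  next
    case (step u u')
    then show ?case using A_step_raises_shape[OF step(2)] dominates_le_trans by fastforce
  qed
  then show ?thesis by (auto simp: dominates_less_def)
qed

end
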